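(* Let $p=P\langle x\rangle\to_{\mathrm{ue}}P\langle v^{\alpha}\rangle=q$ with $P\in\mathcal{X}_{{\mathcal{U}},{\mathcal{A}}}$ and $P(x)=v$. Then there exist a program $r$ and a reduction sequence $d: q\to_{\mathrm{ue}}^{k}\to_{\mathrm{um}} r$ such that: (1) the evaluation context of each $\to_{\mathrm{ue}}$ step in $d$ is in $\mathcal{X}_{{\mathcal{U}},{\mathcal{A}}}$, and the one of the $\to_{\mathrm{um}}$ step is in $\mathcal{M}_{{\mathcal{U}},{\mathcal{A}}}$; (2) $k\geq 0$ is the number of rules (NA) in the derivation of $P\in\mathcal{X}_{{\mathcal{U}},{\mathcal{A}}}$.
   Context: Syntax. Terms $t,u,s ::= x\mid\lambda x.t\mid t\,u$; values $v ::= \lambda x.t$ (variables are not values); environments $E ::= \epsilon\mid E[x\leftarrow t]$; programs $p ::= (t,E)$; $x$ is bound in $E$ and $u$ in $(u,E[x\leftarrow t])$; up to $\alpha$; appended ES bind variables not in the domain of the program/context. Inert terms $i ::= x\mid i\,f$, fireballs $f ::= v\mid i$, non-variable inert terms $i^{+} ::= i\,f$. Contexts. Open term evaluation contexts $\mathcal{H} ::= \langle\cdot\rangle\mid\mathcal{H}\,t\mid i\,\mathcal{H}$; applicative term contexts $\mathcal{H}^{@} ::= \langle\cdot\rangle\,t\mid\mathcal{H}^{@}\,t\mid i\,\mathcal{H}^{@}$. Term contexts $C ::= \langle\cdot\rangle\mid C\,t\mid t\,C$; environment contexts $G ::= E[x\leftarrow C]\mid G[x\leftarrow u]$; program contexts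 $P ::= (C,E)\mid(t,G)$. Appending: $(t,E)@[x\leftarrow u]=(t,E[x\leftarrow u])$, $(C,E)@[x\leftarrow u]=(C,E[x\leftarrow u])$, $(t,G)@[x\leftarrow u]=(t,G[x\leftarrow u])$, and $(t,E)@[x\leftarrow C]:=(t,E[x\leftarrow C])$. Plugging: $(C,E)\langle(t,E')\rangle=(C\langle t\rangle,E'E)$; $(u,E[x\leftarrow C])\langle(t,E')\rangle=(u,E[x\leftarrow C\langle t\rangle]E')$; $(u,G[x\leftarrow s])\langle(t,E)\rangle=((u,G)\langle(t,E)\rangle)@[x\leftarrow s]$; $P\langle t\rangle:=P\langle(t,\epsilon)\rangle$. Look-up $P(x)=t$ if the ES list of $P$ contains $[x\leftarrow t]$ with $t$ a term, $\bot$ otherwise. $v^{\alpha}$: copy of $v$ with fresh bound variables. Variable sets. $an(\lambda x.t)=an(x)=\emptyset$; $an(tu)=\{x\}\cup an(u)$ if $t=x$ variable, else $an(t)\cup an(u)$; $an(\langle\cdot\rangle)=\emptyset$, $an(\mathcal{H}\,t)=an(\mathcal{H})$, $an(i\,\mathcal{H})=an(i)\cup an(\mathcal{H})$. $un(\lambda x.t)=\emptyset$, $un(x)=\{x\}$, $un(tu)=un(u)$ if $t$ variable, else $un(t)\cup un(u)$; $un(\langle\cdot\rangle)=\emptyset$, $un(\mathcal{H}\,t)=un(\mathcal{H})$, $un(i\,\mathcal{H})=un(i)\cup un(\mathcal{H})$. $\mathrm{upd}(S,x,y):=S$ if $x\notin S$, else $(S\setminus\{x\})\cup\{y\}$. Multiplicative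 contexts $P\in\mathcal{M}_{{\mathcal{U}},{\mathcal{A}}}$, inductively: (ax) $(\mathcal{H},\epsilon)\in\mathcal{M}_{un(\mathcal{H}),an(\mathcal{H})}$; (var) $P\in\mathcal{M}_{{\mathcal{U}},{\mathcal{A}}}$, $x\in{\mathcal{U}}\cup{\mathcal{A}}$ $\Rightarrow$ $P@[x\leftarrow y]\in\mathcal{M}_{\mathrm{upd}({\mathcal{U}},x,y),\mathrm{upd}({\mathcal{A}},x,y)}$; (gc) $x\notin{\mathcal{U}}\cup{\mathcal{A}}$ $\Rightarrow$ $P@[x\leftarrow t]\in\mathcal{M}_{{\mathcal{U}},{\mathcal{A}}}$; (I) $x\in{\mathcal{U}}\cup{\mathcal{A}}$ $\Rightarrow$ $P@[x\leftarrow i^{+}]\in\mathcal{M}_{({\mathcal{U}}\setminus\{x\})\cup un(i^{+}),({\mathcal{A}}\setminus\{x\})\cup an(i^{+})}$; (U) $x\in{\mathcal{U}}\setminus{\mathcal{A}}$ $\Rightarrow$ $P@[x\leftarrow v]\in\mathcal{M}_{{\mathcal{U}}\setminus\{x\},{\mathcal{A}}}$; (her) $x\notin{\mathcal{U}}\cup{\mathcal{A}}$ $\Rightarrow$ $P\langle x\rangle@[x\leftarrow\mathcal{H}]\in\mathcal{M}_{{\mathcal{U}}\cup un(\mathcal{H}),{\mathcal{A}}\cup an(\mathcal{H})}$ (each with premise $P\in\mathcal{M}_{{\mathcal{U}},{\mathcal{A}}}$). Exponential contexts $P\in\mathcal{X}_{{\mathcal{U}},{\mathcal{A}}}$, inductively: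 (ax1) $(\mathcal{H}^{@},\epsilon)\in\mathcal{X}_{un(\mathcal{H}^{@}),an(\mathcal{H}^{@})}$; (ax2) $P\in\mathcal{M}_{{\mathcal{U}},{\mathcal{A}}}$, $x\notin{\mathcal{U}}\cup{\mathcal{A}}$ $\Rightarrow$ $P\langle x\rangle@[x\leftarrow\mathcal{H}^{@}]\in\mathcal{X}_{({\mathcal{U}}\setminus\{x\})\cup un(\mathcal{H}^{@}),{\mathcal{A}}\cup an(\mathcal{H}^{@})}$; and, each with premise $P\in\mathcal{X}_{{\mathcal{U}},{\mathcal{A}}}$: (var) $x\in{\mathcal{U}}\cup{\mathcal{A}}$ $\Rightarrow$ $P@[x\leftarrow y]\in\mathcal{X}_{\mathrm{upd}({\mathcal{U}},x,y),\mathrm{upd}({\mathcal{A}},x,y)}$; (I) $x\in{\mathcal{U}}\cup{\mathcal{A}}$ $\Rightarrow$ $P@[x\leftarrow i^{+}]\in\mathcal{X}_{({\mathcal{U}}\setminus\{x\})\cup un(i^{+}),({\mathcal{A}}\setminus\{x\})\cup an(i^{+})}$; (gc) $x\notin{\mathcal{U}}\cup{\mathcal{A}}$ $\Rightarrow$ $P@[x\leftarrow t]\in\mathcal{X}_{{\mathcal{U}},{\mathcal{A}}}$; (U) $x\in{\mathcal{U}}\setminus{\mathcal{A}}$ $\Rightarrow$ $P@[x\leftarrow v]\in\mathcal{X}_{{\mathcal{U}}\setminus\{x\},{\mathcal{A}}}$; (NA) $x\notin{\mathcal{A}}$ $\Rightarrow$ $P\langle x\rangle@[x\leftarrow\langle\cdot\rangle]\in\mathcal{X}_{{\mathcal{U}}\setminus\{x\},{\mathcal{A}}}$.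 Useful Open CbNeed rules: $P\langle(\lambda x.t)u\rangle\to_{\mathrm{um}}P\langle(t,[x\leftarrow u])\rangle$ if $P\in\mathcal{M}_{{\mathcal{U}},{\mathcal{A}}}$ for some ${\mathcal{U}},{\mathcal{A}}$; $P\langle x\rangle\to_{\mathrm{ue}}P\langle v^{\alpha}\rangle$ if $P\in\mathcal{X}_{{\mathcal{U}},{\mathcal{A}}}$ for some ${\mathcal{U}},{\mathcal{A}}$ and $P(x)=v$. *)

theory Defs
  imports Main
begin

type_synonym var = nat

datatype tm = Var var | Lam var tm | App tm tm

(* Environments: E[x<-t] is  E @ [(x,t)]; the leftmost ES is the innermost one. *)
type_synonym env = "(var \<times> tm) list"
type_synonym prog = "tm \<times> env"

datatype ctx = Hole | CAppL ctx tm | CAppR tm ctx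

(* program contexts: PC C E = (C,E);  PG u E y C E2 = (u, E[y<-C]E2) *)
datatype pctx = PC ctx env | PG tm env var ctx env

fun cplug :: "ctx \<Rightarrow> tm \<Rightarrow> tm" where
  "cplug Hole t = t"
| "cplug (CAppL C s) t = App (cplug C t) s"
| "cplug (CAppR s C) t = App s (cplug C t)"

fun pplug :: "pctx \<Rightarrow> prog \<Rightarrow> prog" where
  "pplug (PC C E) (t, E') = (cplug C t, E' @ E)"
| "pplug (PG u E y C E2) (t, E') = (u, E @ [(y, cplug C t)] @ E' @ E2)"

fun papp :: "pctx \<Rightarrow> var \<Rightarrow> tm \<Rightarrow> pctx" where
  "papp (PC C E) x s = PC C (E @ [(x, s)])"
| "papp (PG u E y C E2) x s = PG u E y C (E2 @ [(x, s)])"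

definition capp :: "prog \<Rightarrow> var \<Rightarrow> ctx \<Rightarrow> pctx" where
  "capp p x C = PG (fst p) (snd p) x C []"

(* look-up in the ES list scoping over the hole (nearest binding first) *)
fun plookup :: "pctx \<Rightarrow> var \<Rightarrow> tm option" where
  "plookup (PC C E) x = map_of E x"
| "plookup (PG u E y C E2) x = map_of E2 x"

fun pdom :: "pctx \<Rightarrow> var set" where
  "pdom (PC C E) = fst ` set E"
| "pdom (PG u E y C E2) = fst ` set E \<union> {y} \<union> fst ` set E2"

fun is_val :: "tm \<Rightarrow> bool" where
  "is_val (Lam x t) = True"
| "is_val _ = False"

fun inert :: "tm \<Rightarrow> bool" where
  "inert (Var x) = True"
| "inert (Lam x t) = False"
| "inert (App t u) = (inert t \<and> (is_val u \<or> inert u))"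

definition inert_plus :: "tm \<Rightarrow> bool" where
  "inert_plus t \<longleftrightarrow> inert t \<and> (\<forall>x. t \<noteq> Var x)"

fun is_H :: "ctx \<Rightarrow> bool" where
  "is_H Hole = True"
| "is_H (CAppL C t) = is_H C"
| "is_H (CAppR i C) = (inert i \<and> is_H C)"

fun is_Hat :: "ctx \<Rightarrow> bool" where
  "is_Hat Hole = False"
| "is_Hat (CAppL C t) = (C = Hole \<or> is_Hat C)"
| "is_Hat (CAppR i C) = (inert i \<and> is_Hat C)"

fun an_tm :: "tm \<Rightarrow> var set" where
  "an_tm (Var x) = {}"
| "an_tm (Lam x t) = {}"
| "an_tm (App (Var x) u) = insert x (an_tm u)"
| "an_tm (App t u) = an_tm t \<union> an_tm u"

fun un_tm :: "tm \<Rightarrow> var set" where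
  "un_tm (Var x) = {x}"
| "un_tm (Lam x t) = {}"
| "un_tm (App (Var x) u) = un_tm u"
| "un_tm (App t u) = un_tm t \<union> un_tm u"

fun an_ctx :: "ctx \<Rightarrow> var set" where
  "an_ctx Hole = {}"
| "an_ctx (CAppL C t) = an_ctx C"
| "an_ctx (CAppR i C) = an_tm i \<union> an_ctx C"

fun un_ctx :: "ctx \<Rightarrow> var set" where
  "un_ctx Hole = {}"
| "un_ctx (CAppL C t) = un_ctx C"
| "un_ctx (CAppR i C) = un_tm i \<union> un_ctx C"

definition updS :: "var set \<Rightarrow> var \<Rightarrow> var \<Rightarrow> var set" where
  "updS S x y = (if x \<notin> S then S else (S - {x}) \<union> {y})"

(* appended ES bind variables not in the domain of the context: side condition x \<notin> pdom P *)
inductive Md :: "var set \<Rightarrow> var set \<Rightarrow> pctx \<Rightarrow> bool" where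
  ax: "is_H H \<Longrightarrow> Md (un_ctx H) (an_ctx H) (PC H [])"
| var: "Md U A P \<Longrightarrow> x \<in> U \<union> A \<Longrightarrow> x \<notin> pdom P \<Longrightarrow>
        Md (updS U x y) (updS A x y) (papp P x (Var y))"
| gc: "Md U A P \<Longrightarrow> x \<notin> U \<union> A \<Longrightarrow> x \<notin> pdom P \<Longrightarrow> Md U A (papp P x t)"
| I: "Md U A P \<Longrightarrow> inert_plus i \<Longrightarrow> x \<in> U \<union> A \<Longrightarrow> x \<notin> pdom P \<Longrightarrow>
        Md ((U - {x}) \<union> un_tm i) ((A - {x}) \<union> an_tm i) (papp P x i)"
| U: "Md U A P \<Longrightarrow> is_val v \<Longrightarrow> x \<in> U - A \<Longrightarrow> x \<notin> pdom P \<Longrightarrow>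
        Md (U - {x}) A (papp P x v)"
| her: "Md U A P \<Longrightarrow> is_H H \<Longrightarrow> x \<notin> U \<union> A \<Longrightarrow> x \<notin> pdom P \<Longrightarrow>
        Md (U \<union> un_ctx H) (A \<union> an_ctx H) (capp (pplug P (Var x, [])) x H)"

(* Xd U A P n : there is a derivation of P \<in> X_{U,A} using exactly n rules (NA) *)
inductive Xd :: "var set \<Rightarrow> var set \<Rightarrow> pctx \<Rightarrow> nat \<Rightarrow> bool" where
  ax1: "is_Hat H \<Longrightarrow> Xd (un_ctx H) (an_ctx H) (PC H []) 0"
| ax2: "Md U A P \<Longrightarrow> is_Hat H \<Longrightarrow> x \<notin> U \<union> A \<Longrightarrow> x \<notin> pdom P \<Longrightarrow>
        Xd ((U - {x}) \<union> un_ctx H) (A \<union> an_ctx H) (capp (pplug P (Var x, [])) x H) 0"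
| var: "Xd U A P n \<Longrightarrow> x \<in> U \<union> A \<Longrightarrow> x \<notin> pdom P \<Longrightarrow>
        Xd (updS U x y) (updS A x y) (papp P x (Var y)) n"
| I: "Xd U A P n \<Longrightarrow> inert_plus i \<Longrightarrow> x \<in> U \<union> A \<Longrightarrow> x \<notin> pdom P \<Longrightarrow>
        Xd ((U - {x}) \<union> un_tm i) ((A - {x}) \<union> an_tm i) (papp P x i) n"
| gc: "Xd U A P n \<Longrightarrow> x \<notin> U \<union> A \<Longrightarrow> x \<notin> pdom P \<Longrightarrow> Xd U A (papp P x t) n"
| U: "Xd U A P n \<Longrightarrow> is_val v \<Longrightarrow> x \<in> U - A \<Longrightarrow> x \<notin> pdom P \<Longrightarrow>
        Xd (U - {x}) A (papp P x v) n"
| NA: "Xd U A P n \<Longrightarrow> x \<notin> A \<Longrightarrow> x \<notin> pdom P \<Longrightarrow>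
        Xd (U - {x}) A (capp (pplug P (Var x, [])) x Hole) (Suc n)"

definition sw :: "var \<Rightarrow> var \<Rightarrow> var \<Rightarrow> var" where
  "sw a b c = (if c = a then b else if c = b then a else c)"

fun tswap :: "var \<Rightarrow> var \<Rightarrow> tm \<Rightarrow> tm" where
  "tswap a b (Var x) = Var (sw a b x)"
| "tswap a b (Lam x t) = Lam (sw a b x) (tswap a b t)"
| "tswap a b (App t u) = App (tswap a b t) (tswap a b u)"

fun fv :: "tm \<Rightarrow> var set" where
  "fv (Var x) = {x}"
| "fv (Lam x t) = fv t - {x}"
| "fv (App t u) = fv t \<union> fv u"

fun bv :: "tm \<Rightarrow> var set" where
  "bv (Var x) = {}"
| "bv (Lam x t) = insert x (bv t)"
| "bv (App t u) = bv t \<union> bv u"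

fun vars :: "tm \<Rightarrow> var set" where
  "vars (Var x) = {x}"
| "vars (Lam x t) = insert x (vars t)"
| "vars (App t u) = vars t \<union> vars u"

inductive alpha :: "tm \<Rightarrow> tm \<Rightarrow> bool" where
  "alpha (Var x) (Var x)"
| "alpha t t' \<Longrightarrow> alpha u u' \<Longrightarrow> alpha (App t u) (App t' u')"
| "alpha t s \<Longrightarrow> alpha (Lam x t) (Lam x s)"
| "x \<noteq> y \<Longrightarrow> x \<notin> fv s \<Longrightarrow> alpha t (tswap x y s) \<Longrightarrow> alpha (Lam x t) (Lam y s)"

definition prog_vars :: "prog \<Rightarrow> var set" where
  "prog_vars p = vars (fst p) \<union> (\<Union>(x, t) \<in> set (snd p). insert x (vars t))"

(* v' is a copy v^alpha of v whose bound variables are fresh w.r.t. the program p *)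
definition fresh_copy :: "tm \<Rightarrow> tm \<Rightarrow> prog \<Rightarrow> bool" where
  "fresh_copy v v' p \<longleftrightarrow> alpha v v' \<and> bv v' \<inter> prog_vars p = {}"

(* p = P<x> ->ue P<v^alpha> = q  with P(x) = v  (membership P \<in> X stated separately) *)
definition ue_at :: "pctx \<Rightarrow> prog \<Rightarrow> prog \<Rightarrow> bool" where
  "ue_at P p q \<longleftrightarrow> (\<exists>x v v'. p = pplug P (Var x, []) \<and> plookup P x = Some v \<and> is_val v
      \<and> fresh_copy v v' p \<and> q = pplug P (v', []))"

(* p = P<(\<lambda>x.t)u> ->um P<(t,[x<-u])> = r  (membership P \<in> M stated separately) *)
definition um_at :: "pctx \<Rightarrow> prog \<Rightarrow> prog \<Rightarrow> bool" where
  "um_at P p r \<longleftrightarrow> (\<exists>x t u. p = pplug P (App (Lam x t) u, []) \<and> x \<notin> pdom P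
      \<and> r = pplug P (t, [(x, u)]))"

end

theory Submission
  imports Defs
begin

text \<open>
  By induction on the derivation of \<open>P \<in> X\<^sub>U\<^sub>,\<^sub>A\<close>, generalised over a suffix of explicit
  substitutions appended by the rules (var), (gc), (I), (U): these rules exist for both \<open>X\<close> and
  \<open>M\<close> with the same effect on \<open>U, A\<close>, so the suffix is harmless for either kind of context.
  At an axiom (ax1)/(ax2) the hole sits in applicative position \<open>H\<langle>\<langle>\<cdot>\<rangle> t\<rangle>\<close>, so the copied
  abstraction forms a multiplicative redex whose context is an \<open>M\<close>-context by (ax)/(her).
  At a rule (NA) for \<open>[x \<leftarrow> \<langle>\<cdot>\<rangle>]\<close> the abstraction becomes the substitution \<open>[x \<leftarrow> v\<^sup>\<alpha>]\<close>,
  allowed in the suffix by (U) or (gc) because \<open>x \<notin> A\<close>; the premise context has \<open>x\<close> in its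
  hole, so one more exponential step fires there, and the induction continues.
\<close>

lemma sw_sw [simp]: "sw a b (sw a b c) = c"
  by (simp add: sw_def)

lemma sw_eq_iff: "sw a b c = sw a b d \<longleftrightarrow> c = d"
  by (auto simp: sw_def)

lemma sw_sw_conj: "sw a b (sw x y c) = sw (sw a b x) (sw a b y) (sw a b c)"
  by (simp add: sw_def)

lemma tswap_tswap [simp]: "tswap a b (tswap a b t) = t"
  by (induction t) auto

lemma size_tswap [simp]: "size (tswap a b t) = size t"
  by (induction t) auto

lemma tswap_tswap_conj: "tswap a b (tswap x y s) = tswap (sw a b x) (sw a b y) (tswap a b s)"
  by (induction s) (simp_all add: sw_sw_conj[of a b x y])

lemma fv_tswap: "fv (tswap a b t) = sw a b ` fv t"
  by (induction t) (auto simp: sw_eq_iff)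

lemma fv_subset_vars: "fv t \<subseteq> vars t"
  by (induction t) auto

lemma finite_vars: "finite (vars t)"
  by (induction t) auto

lemma finite_prog_vars: "finite (prog_vars p)"
  by (auto simp: prog_vars_def finite_vars)

lemma alpha_tswap: "alpha t s \<Longrightarrow> alpha (tswap a b t) (tswap a b s)"
proof (induction rule: alpha.induct)
  case (4 x y s t)
  have "sw a b x \<noteq> sw a b y" "sw a b x \<notin> fv (tswap a b s)"
    using 4 by (auto simp: fv_tswap sw_eq_iff)
  moreover have "alpha (tswap a b t) (tswap (sw a b x) (sw a b y) (tswap a b s))"
    using "4.IH" by (simp add: tswap_tswap_conj[symmetric])
  ultimately show ?case
    by (simp add: alpha.intros(4))
qed (simp_all add: alpha.intros(1-3))

lemma alpha_fv: "alpha t s \<Longrightarrow> fv t = fv s"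
proof (induction rule: alpha.induct)
  case (4 x y s t)
  then have "fv t = sw x y ` fv s"
    by (simp add: fv_tswap)
  with 4 show ?case
    by (auto simp: sw_def image_iff split: if_splits)
qed auto

lemma alpha_LamE: "alpha (Lam x t) w \<Longrightarrow> \<exists>y s. w = Lam y s"
  by (cases rule: alpha.cases) auto

lemma alpha_fresh_bv_exists:
  assumes "finite S"
  shows "\<exists>s. alpha t s \<and> bv s \<inter> S = {}"
proof (induction t rule: measure_induct_rule[where f = size])
  case (less t)
  show ?case
  proof (cases t)
    case (Var x)
    then show ?thesis
      by (intro exI[of _ t]) (simp add: alpha.intros(1))
  next
    case (App t1 t2)
    with less[of t1] less[of t2] obtain s1 s2
      where "alpha t1 s1" "bv s1 \<inter> S = {}" "alpha t2 s2" "bv s2 \<inter> S = {}"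
      by auto
    with App show ?thesis
      by (intro exI[of _ "App s1 s2"]) (auto simp: alpha.intros(2))
  next
    case (Lam x t1)
    obtain y where y: "y \<notin> S \<union> vars t1 \<union> {x}"
      using ex_new_if_finite[OF infinite_UNIV_nat, of "S \<union> vars t1 \<union> {x}"] assms finite_vars by auto
    obtain s where s: "alpha (tswap x y t1) s" "bv s \<inter> S = {}"
      using less[of "tswap x y t1"] Lam by auto
    \<comment> \<open>renaming \<open>y\<close> back to \<open>x\<close> is harmless since \<open>y\<close> does not occur in \<open>t1\<close>\<close>
    have "x \<notin> fv s"
      using alpha_fv[OF s(1)] y fv_subset_vars[of t1] by (auto simp: fv_tswap sw_def)
    moreover have "alpha t1 (tswap x y s)"
      using alpha_tswap[OF s(1), of x y] by simp
    ultimately have "alpha (Lam x t1) (Lam y s)"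
      using y by (blast intro: alpha.intros(4))
    with s(2) y Lam show ?thesis
      by (intro exI[of _ "Lam y s"]) auto
  qed
qed

lemma fresh_copy_Lam_exists: "\<exists>y s. fresh_copy (Lam x t) (Lam y s) p"
  using alpha_fresh_bv_exists[OF finite_prog_vars] alpha_LamE unfolding fresh_copy_def by metis

fun papps :: "pctx \<Rightarrow> env \<Rightarrow> pctx" where
  "papps P [] = P"
| "papps P ((x, s) # es) = papps (papp P x s) es"

lemma pdom_papp [simp]: "pdom (papp P x s) = insert x (pdom P)"
  by (cases P) auto

lemma pdom_papps: "pdom (papps P es) = pdom P \<union> fst ` set es"
  by (induction es arbitrary: P) force+

lemma pdom_capp [simp]: "pdom (capp p x C) = fst ` set (snd p) \<union> {x}"
  by (simp add: capp_def)

lemma pdom_eq_dom_pplug: "pdom P = fst ` set (snd (pplug P (t, [])))"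
  by (cases P) auto

lemma pdom_subset_prog_vars: "pdom P \<subseteq> prog_vars (pplug P (t, []))"
  by (auto simp: pdom_eq_dom_pplug[of P t] prog_vars_def)

lemma fresh_copy_bv_notin_pdom: "fresh_copy v (Lam y s) (pplug P (t, [])) \<Longrightarrow> y \<notin> pdom P"
  using pdom_subset_prog_vars[of P t] by (auto simp: fresh_copy_def)

lemma pplug_papp:
  "pplug (papp P x s) (t, []) = (fst (pplug P (t, [])), snd (pplug P (t, [])) @ [(x, s)])"
  by (cases P) auto

lemma pplug_papps:
  "pplug (papps P es) (t, []) = (fst (pplug P (t, [])), snd (pplug P (t, [])) @ es)"
  by (induction es arbitrary: P) (auto simp: pplug_papp)

lemma plookup_papp_self: "x \<notin> pdom P \<Longrightarrow> plookup (papp P x s) x = Some s"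
  by (cases P) (auto simp: map_add_def dest!: map_of_SomeD intro: rev_image_eqI split: option.splits)

lemma plookup_papp: "plookup P z = Some v \<Longrightarrow> plookup (papp P x s) z = Some v"
  by (cases P) auto

lemma plookup_papps: "plookup P z = Some v \<Longrightarrow> plookup (papps P es) z = Some v"
  by (induction es arbitrary: P) (auto simp: plookup_papp)

lemma is_Hat_eq_is_H_App:
  assumes "is_Hat H"
  shows "\<exists>H' t. is_H H' \<and> (\<forall>w. cplug H w = cplug H' (App w t))
           \<and> un_ctx H' = un_ctx H \<and> an_ctx H' = an_ctx H"
  using assms
proof (induction H)
  case (CAppL C s)
  show ?case
  proof (cases "C = Hole")
    case True
    then show ?thesis
      by (auto intro!: exI[of _ Hole])
  next
    case False
    with CAppL obtain H' t where "is_H H'" "\<forall>w. cplug C w = cplug H' (App w t)"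
      "un_ctx H' = un_ctx C" "an_ctx H' = an_ctx C"
      by auto
    then show ?thesis
      by (auto intro!: exI[of _ "CAppL H' s"])
  qed
next
  case (CAppR i C)
  then obtain H' t where "is_H H'" "\<forall>w. cplug C w = cplug H' (App w t)"
    "un_ctx H' = un_ctx C" "an_ctx H' = an_ctx C"
    by auto
  with CAppR.prems show ?case
    by (intro exI[of _ "CAppR i H'"] exI[of _ t]) auto
qed simp

inductive ext_step :: "var set \<Rightarrow> var set \<Rightarrow> var \<Rightarrow> tm \<Rightarrow> var set \<Rightarrow> var set \<Rightarrow> bool" where
  ext_var: "x \<in> U \<union> A \<Longrightarrow> ext_step U A x (Var y) (updS U x y) (updS A x y)"
| ext_gc: "x \<notin> U \<union> A \<Longrightarrow> ext_step U A x t U A"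
| ext_I: "inert_plus i \<Longrightarrow> x \<in> U \<union> A \<Longrightarrow>
    ext_step U A x i ((U - {x}) \<union> un_tm i) ((A - {x}) \<union> an_tm i)"
| ext_U: "is_val v \<Longrightarrow> x \<in> U - A \<Longrightarrow> ext_step U A x v (U - {x}) A"

text \<open>\<open>D\<close> is the domain of the context being extended, so that each appended variable is fresh.\<close>

inductive ext_steps :: "var set \<Rightarrow> var set \<Rightarrow> var set \<Rightarrow> env \<Rightarrow> var set \<Rightarrow> var set \<Rightarrow> bool" where
  ext_Nil: "ext_steps D U A [] U A"
| ext_Cons: "x \<notin> D \<Longrightarrow> ext_step U A x s U' A' \<Longrightarrow> ext_steps (insert x D) U' A' es U'' A'' \<Longrightarrow>
    ext_steps D U A ((x, s) # es) U'' A''"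

lemma Xd_papp: "Xd U A P m \<Longrightarrow> x \<notin> pdom P \<Longrightarrow> ext_step U A x s U' A' \<Longrightarrow> Xd U' A' (papp P x s) m"
  by (erule ext_step.cases) (auto intro: Xd.intros)

lemma Md_papp: "Md U A P \<Longrightarrow> x \<notin> pdom P \<Longrightarrow> ext_step U A x s U' A' \<Longrightarrow> Md U' A' (papp P x s)"
  by (erule ext_step.cases) (auto intro: Md.intros)

lemma Xd_papps: "ext_steps (pdom P) U A es U' A' \<Longrightarrow> Xd U A P m \<Longrightarrow> Xd U' A' (papps P es) m"
proof (induction "pdom P" U A es U' A' arbitrary: P rule: ext_steps.induct)
  case (ext_Cons x U A s U' A' es U'' A'')
  then show ?case
    using Xd_papp by fastforce
qed simp

lemma Md_papps: "ext_steps (pdom P) U A es U' A' \<Longrightarrow> Md U A P \<Longrightarrow> Md U' A' (papps P es)"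
proof (induction "pdom P" U A es U' A' arbitrary: P rule: ext_steps.induct)
  case (ext_Cons x U A s U' A' es U'' A'')
  then show ?case
    using Md_papp by fastforce
qed simp

inductive ue_um_seq :: "var set \<Rightarrow> var set \<Rightarrow> nat \<Rightarrow> prog \<Rightarrow> bool" where
  um: "Md U A Q \<Longrightarrow> um_at Q q r \<Longrightarrow> ue_um_seq U A 0 q"
| ue: "ue_at P q q' \<Longrightarrow> Xd U A P m \<Longrightarrow> ue_um_seq U A n q' \<Longrightarrow> ue_um_seq U A (Suc n) q"

lemma ue_um_seq_lists:
  assumes "ue_um_seq U A n q"
  shows "\<exists>(Ps :: pctx list) (qs :: prog list) Q r.
           length Ps = n \<and> length qs = Suc n \<and> qs ! 0 = q
         \<and> (\<forall>i<n. ue_at (Ps ! i) (qs ! i) (qs ! Suc i) \<and> (\<exists>m. Xd U A (Ps ! i) m))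
         \<and> Md U A Q \<and> um_at Q (qs ! n) r"
  using assms
proof induction
  case (um U A Q q r)
  then show ?case
    by (intro exI[of _ "[]"] exI[of _ "[q]"] exI[of _ Q] exI[of _ r]) auto
next
  case (ue P q q' U A m n)
  then obtain Ps qs Q r where IH: "length Ps = n" "length qs = Suc n" "qs ! 0 = q'"
    "\<forall>i<n. ue_at (Ps ! i) (qs ! i) (qs ! Suc i) \<and> (\<exists>m. Xd U A (Ps ! i) m)"
    "Md U A Q" "um_at Q (qs ! n) r"
    by blast
  have "\<forall>i<Suc n. ue_at ((P # Ps) ! i) ((q # qs) ! i) ((q # qs) ! Suc i)
          \<and> (\<exists>m. Xd U A ((P # Ps) ! i) m)"
    using ue.hyps IH(3,4) by (auto simp: less_Suc_eq_0_disj)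
  with IH show ?case
    by (intro exI[of _ "P # Ps"] exI[of _ "q # qs"] exI[of _ Q] exI[of _ r]) auto
qed

lemma ue_um_seq_redex:
  assumes "Md U A Q" and "pdom Q = pdom P"
    and "\<And>w. pplug P (w, []) = pplug Q (App w t, [])"
    and "ext_steps (pdom P) U A es U' A'" and "z \<notin> pdom (papps P es)"
  shows "ue_um_seq U' A' 0 (pplug (papps P es) (Lam z b, []))"
proof -
  have "Md U' A' (papps Q es)"
    using Md_papps assms(1,2,4) by metis
  moreover have "um_at (papps Q es) (pplug (papps P es) (Lam z b, [])) (pplug (papps Q es) (b, [(z, t)]))"
    using assms(2,3,5) by (auto simp: um_at_def pplug_papps pdom_papps)
  ultimately show ?thesis
    by (rule ue_um_seq.um)
qed

lemma ue_um_seq_from_Xd: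
  assumes "Xd U A P n"
    and "ext_steps (pdom P) U A es U' A'" and "z \<notin> pdom (papps P es)"
  shows "ue_um_seq U' A' n (pplug (papps P es) (Lam z b, []))"
  using assms
proof (induction arbitrary: es U' A' z b)
  case (ax1 H)
  obtain H' t where H': "is_H H'" "\<forall>w. cplug H w = cplug H' (App w t)"
    "un_ctx H' = un_ctx H" "an_ctx H' = an_ctx H"
    using is_Hat_eq_is_H_App[OF ax1(1)] by blast
  have "Md (un_ctx H) (an_ctx H) (PC H' [])"
    using Md.ax[OF H'(1)] H' by simp
  then show ?case
    by (rule ue_um_seq_redex[where t = t]) (use H' ax1 in auto)
next
  case (ax2 U A P H x)
  obtain H' t where H': "is_H H'" "\<forall>w. cplug H w = cplug H' (App w t)"
    "un_ctx H' = un_ctx H" "an_ctx H' = an_ctx H"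
    using is_Hat_eq_is_H_App[OF ax2(2)] by blast
  have "Md (U \<union> un_ctx H') (A \<union> an_ctx H') (capp (pplug P (Var x, [])) x H')"
    using Md.her[OF ax2(1) H'(1) ax2(3,4)] .
  moreover have "U - {x} = U"
    using ax2(3) by auto
  ultimately have "Md ((U - {x}) \<union> un_ctx H) (A \<union> an_ctx H) (capp (pplug P (Var x, [])) x H')"
    using H' by simp
  then show ?case
    by (rule ue_um_seq_redex[where t = t]) (use H' ax2 in \<open>auto simp: capp_def\<close>)
next
  case (var U A P n x y)
  then have "ext_steps (pdom P) U A ((x, Var y) # es) U' A'"
    by (auto intro: ext_Cons ext_var)
  with var.IH[of "(x, Var y) # es"] var.prems show ?case
    by simp
next
  case (I U A P n i x)
  then have "ext_steps (pdom P) U A ((x, i) # es) U' A'"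
    by (auto intro: ext_Cons ext_I)
  with I.IH[of "(x, i) # es"] I.prems show ?case
    by simp
next
  case (gc U A P n x t)
  then have "ext_steps (pdom P) U A ((x, t) # es) U' A'"
    by (auto intro: ext_Cons ext_gc)
  with gc.IH[of "(x, t) # es"] gc.prems show ?case
    by simp
next
  case (U U A P n v x)
  then have "ext_steps (pdom P) U A ((x, v) # es) U' A'"
    by (auto intro: ext_Cons ext_U)
  with U.IH[of "(x, v) # es"] U.prems show ?case
    by simp
next
  case (NA U A P n x)
  let ?es = "(x, Lam z b) # es"
  let ?P = "papps P ?es"
  have "ext_step U A x (Lam z b) (U - {x}) A"
    using NA.hyps(2) ext_U[of "Lam z b" x U A] ext_gc[of x U A] by (cases "x \<in> U") auto
  then have ext: "ext_steps (pdom P) U A ?es U' A'"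
    using NA.prems(1) NA.hyps(3) pdom_eq_dom_pplug[of P "Var x"] by (auto intro: ext_Cons)
  obtain y s where copy: "fresh_copy (Lam z b) (Lam y s) (pplug ?P (Var x, []))"
    using fresh_copy_Lam_exists by blast
  have "plookup ?P x = Some (Lam z b)"
    by (simp add: plookup_papps plookup_papp_self NA.hyps(3))
  with copy have "ue_at ?P (pplug ?P (Var x, [])) (pplug ?P (Lam y s, []))"
    unfolding ue_at_def by (intro exI[of _ x] exI[of _ "Lam z b"] exI[of _ "Lam y s"]) simp
  moreover have "Xd U' A' ?P n"
    using Xd_papps[OF ext NA.hyps(1)] .
  moreover have "ue_um_seq U' A' n (pplug ?P (Lam y s, []))"
    using NA.IH[OF ext] fresh_copy_bv_notin_pdom[OF copy] .
  moreover have "pplug (papps (capp (pplug P (Var x, [])) x Hole) es) (Lam z b, [])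
      = pplug ?P (Var x, [])"
    by (simp add: pplug_papps pplug_papp capp_def)
  ultimately show ?case
    by (simp add: ue_um_seq.ue)
qed

theorem mainTheorem6:
  assumes "Xd U A P n"
    and "ue_at P p q"
  shows "\<exists>(Ps :: pctx list) (qs :: prog list) Q r.
           length Ps = n \<and> length qs = Suc n \<and> qs ! 0 = q
         \<and> (\<forall>i<n. ue_at (Ps ! i) (qs ! i) (qs ! Suc i) \<and> (\<exists>m. Xd U A (Ps ! i) m))
         \<and> Md U A Q \<and> um_at Q (qs ! n) r"
proof -
  obtain x v v' where "p = pplug P (Var x, [])" "is_val v" "fresh_copy v v' p" "q = pplug P (v', [])"
    using assms(2) unfolding ue_at_def by blast
  moreover obtain z b where "v' = Lam z b"
    using \<open>is_val v\<close> \<open>fresh_copy v v' p\<close>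
    by (cases v) (auto simp: fresh_copy_def dest!: alpha_LamE)
  ultimately have "z \<notin> pdom P" and "q = pplug (papps P []) (Lam z b, [])"
    using fresh_copy_bv_notin_pdom by auto
  then have "ue_um_seq U A n q"
    using ue_um_seq_from_Xd[OF assms(1) ext_Nil] by simp
  then show ?thesis
    by (rule ue_um_seq_lists)
qed

end
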